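(* Let $k=\mathbb{F}_q$ with $q=p^m$, $p$ prime, $m\geq 1$. (1) Let $p_0,p',q_0,q'$ be four closed points of degree $2$ in $\mathbb{P}^2$ such that $\{p_0,p'\}$ is in general position and $\{q_0,q'\}$ is in general position. Then there exists $A\in\mathrm{Aut}(\mathbb{P}^2_k)=\mathrm{PGL}_3(k)$ sending $p_0$ onto $q_0$ and $p'$ onto $q'$. (2) Let $p_0,q_0$ be two closed points of degree $4$ in $\mathbb{P}^2$, each in general position. Then there exists $A\in\mathrm{Aut}(\mathbb{P}^2_k)$ sending $p_0$ onto $q_0$.
   Context: A closed point of degree $d$ of $\mathbb{P}^2_k$ corresponds to a Galois orbit of $d$ geometric points. A collection of closed points is in general position if the four geometric points involved (the two geometric components of each of the two degree-$2$ points, resp. the four geometric components of the degree-$4$ point) are such that no three are collinear. *)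

theory Defs
  imports "HOL-Analysis.Analysis"
begin

text \<open>Model: a finite field L (a type) of cardinality q^4; the base field k = F_q is the
subfield {x. x^q = x} of L.  Geometric points of P^2 are points of P^2(L), i.e. lines
through the origin of L^3, represented as the set of nonzero multiples of a nonzero vector.
Since every closed point of degree d dividing 4 has all its geometric points in
P^2(F_{q^4}) = P^2(L), closed points of degree 2 and 4 are exactly Frobenius orbits
of size 2 resp. 4 in P^2(L).\<close>

definition proj_points :: "('a::field ^ 3) set set" where
  "proj_points = {{c *s v | c. c \<noteq> 0} | v. v \<noteq> (0::'a^3)}"

definition frob_vec :: "nat \<Rightarrow> 'a::field ^ 3 \<Rightarrow> 'a ^ 3" where
  "frob_vec q v = (\<chi> i. (v $ i) ^ q)"

definition frob_pt :: "nat \<Rightarrow> ('a::field ^ 3) set \<Rightarrow> ('a ^ 3) set" where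
  "frob_pt q X = frob_vec q ` X"

definition closed_point :: "nat \<Rightarrow> nat \<Rightarrow> ('a::field ^ 3) set set \<Rightarrow> bool" where
  "closed_point q d P \<longleftrightarrow>
     (\<exists>x \<in> proj_points. P = {(frob_pt q ^^ n) x | n. True}) \<and> card P = d"

definition collinear3 :: "('a::field ^ 3) set \<Rightarrow> ('a ^ 3) set \<Rightarrow> ('a ^ 3) set \<Rightarrow> bool" where
  "collinear3 X Y Z \<longleftrightarrow>
     (\<exists>a::'a^3. a \<noteq> 0 \<and> (\<forall>v \<in> X \<union> Y \<union> Z. (\<Sum>i\<in>UNIV. a $ i * v $ i) = 0))"

definition general_position :: "('a::field ^ 3) set set \<Rightarrow> bool" where
  "general_position S \<longleftrightarrow> card S = 4 \<and>
     (\<forall>X\<in>S. \<forall>Y\<in>S. \<forall>Z\<in>S. X \<noteq> Y \<and> X \<noteq> Z \<and> Y \<noteq> Z \<longrightarrow> \<not> collinear3 X Y Z)"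

definition k_automorphism :: "nat \<Rightarrow> 'a::field ^ 3 ^ 3 \<Rightarrow> bool" where
  "k_automorphism q A \<longleftrightarrow> invertible A \<and> (\<forall>i j. (A $ i $ j) ^ q = A $ i $ j)"

definition act :: "'a::field ^ 3 ^ 3 \<Rightarrow> ('a ^ 3) set set \<Rightarrow> ('a ^ 3) set set" where
  "act A P = (\<lambda>X. (\<lambda>v. A *v v) ` X) ` P"

end

(*
  All geometric points involved live in P^2(L) with L = F_(q^4). On each side the four
  geometric points form a projective frame (no three collinear), and Frobenius permutes the
  source frame and the target frame in the same way: it swaps the two geometric points of each
  degree-2 point and cycles the four geometric points of a degree-4 point. By the fundamental
  theorem of projective geometry some A in PGL_3(L) carries one frame to the other, and A is
  unique up to a scalar. The matrix A^(q) obtained by raising the entries of A to the q-th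
  power carries the frames in the same way, so A^(q) = l A by uniqueness; dividing A by one of
  its nonzero entries then makes all entries Frobenius-fixed, i.e. puts A in PGL_3(k).
*)
theory Submission
  imports Defs "HOL-Number_Theory.Residues"
begin

lemma CHAR_eq_prime_of_card_power:
  assumes "prime p" "CARD('a::field) = p ^ n" "n > 0"
  shows "CHAR('a) = p"
proof -
  have "CARD('a) > 0" using assms by (simp add: prime_gt_0_nat)
  then have "finite (UNIV :: 'a set)" by (rule card_ge_0_finite)
  then have "prime CHAR('a)" by (intro prime_CHAR_semidom finite_imp_CHAR_pos)
  moreover have "CHAR('a) dvd p ^ n" using CHAR_dvd_CARD[where 'a='a] assms(2) by simp
  ultimately show ?thesis using assms(1) prime_dvd_power primes_dvd_imp_eq by blast
qed

(* The library's finite_field_power_card_eq_same is stated for the class finite_field, which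
   a type variable of sort {field, finite} is not known to belong to. *)
lemma field_power_card_eq:
  assumes "finite (UNIV :: 'a::field set)"
  shows "x ^ CARD('a) = (x :: 'a)"
proof (cases "x = 0")
  case True
  then show ?thesis using assms finite_UNIV_card_ge_0[where 'a='a] by simp
next
  case False
  define G :: "'a monoid" where "G = \<lparr>carrier = UNIV - {0}, monoid.mult = (*), one = 1\<rparr>"
  interpret group G
  proof (rule groupI)
    fix y assume "y \<in> carrier G"
    then show "\<exists>z\<in>carrier G. z \<otimes>\<^bsub>G\<^esub> y = \<one>\<^bsub>G\<^esub>"
      by (intro bexI[of _ "inverse y"]) (auto simp: G_def)
  qed (auto simp: G_def mult.assoc)
  have pow: "y [^]\<^bsub>G\<^esub> n = y ^ n" for y and n :: nat
    by (induction n) (simp_all add: G_def)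
  have "order G = CARD('a) - 1"
    using assms by (simp add: order_def G_def card_Diff_singleton)
  then have "x ^ (CARD('a) - 1) = 1"
    using pow_order_eq_1[of x] False pow by (simp add: G_def)
  moreover have "CARD('a) > 0" using assms by (simp add: finite_UNIV_card_ge_0)
  ultimately show ?thesis by (metis power_minus_mult mult_1_left)
qed

lemma mat_matrix_vector_mult: "mat c *v x = c *s (x :: 'a::semiring_1 ^ 'n)"
  by (simp add: vec_eq_iff matrix_vector_mult_def mat_def if_distrib if_distribR
      cong del: if_weak_cong)

lemma mat_matrix_mult_nth: "(mat c ** A) $ i $ j = c * (A :: 'a::semiring_1 ^ 'n ^ 'm) $ i $ j"
  by (simp add: matrix_matrix_mult_def mat_def if_distrib if_distribR cong del: if_weak_cong)

lemma matrix_mat_mult_nth: "(A ** mat c) $ i $ j = (A :: 'a::semiring_1 ^ 'n ^ 'm) $ i $ j * c"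
  by (simp add: matrix_matrix_mult_def mat_def if_distrib if_distribR cong del: if_weak_cong)

lemma invertible_mat: "c \<noteq> 0 \<Longrightarrow> invertible (mat c :: 'a::field ^ 'n ^ 'n)"
  unfolding invertible_def
  by (intro exI[of _ "mat (inverse c)"])
    (simp add: matrix_eq mat_matrix_vector_mult flip: matrix_vector_mul_assoc)

definition proj_pt :: "'a::field ^ 'n \<Rightarrow> ('a ^ 'n) set" where
  "proj_pt v = {c *s v | c. c \<noteq> 0}"

lemma proj_pt_eq_iff: "proj_pt u = proj_pt v \<longleftrightarrow> (\<exists>c. c \<noteq> 0 \<and> u = c *s v)"
proof
  assume "proj_pt u = proj_pt v"
  moreover have "u \<in> proj_pt u" unfolding proj_pt_def by (auto intro: exI[of _ 1])
  ultimately show "\<exists>c. c \<noteq> 0 \<and> u = c *s v" unfolding proj_pt_def by blast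
next
  assume "\<exists>c. c \<noteq> 0 \<and> u = c *s v"
  then obtain c where c: "c \<noteq> 0" "u = c *s v" by blast
  have "d *s u \<in> proj_pt v" if "d \<noteq> 0" for d
    unfolding proj_pt_def using that c
    by (intro CollectI exI[of _ "d * c"]) (simp add: vector_smult_assoc)
  moreover have "d *s v \<in> proj_pt u" if "d \<noteq> 0" for d
    unfolding proj_pt_def using that c
    by (intro CollectI exI[of _ "d / c"]) (simp add: vector_smult_assoc)
  ultimately show "proj_pt u = proj_pt v"
    unfolding proj_pt_def[of u] proj_pt_def[of v] by blast
qed

lemma proj_pt_smult [simp]: "c \<noteq> 0 \<Longrightarrow> proj_pt (c *s v) = proj_pt v"
  by (auto simp: proj_pt_eq_iff)

lemma image_proj_pt: "(\<lambda>v. A *v v) ` proj_pt x = proj_pt (A *v x)"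
proof
  show "(\<lambda>v. A *v v) ` proj_pt x \<subseteq> proj_pt (A *v x)"
    unfolding proj_pt_def by (auto simp: vector_scalar_commute)
  show "proj_pt (A *v x) \<subseteq> (\<lambda>v. A *v v) ` proj_pt x"
    unfolding proj_pt_def by (auto simp: image_iff simp flip: vector_scalar_commute)
qed

lemma proj_pt_matrix_vector_cong:
  "proj_pt u = proj_pt v \<Longrightarrow> proj_pt (A *v u) = proj_pt (A *v v)"
  unfolding image_proj_pt[symmetric] by simp

lemma act_image_proj_pt: "act A ((\<lambda>k. proj_pt (u k)) ` S) = (\<lambda>k. proj_pt (A *v u k)) ` S"
  by (simp add: act_def image_image image_proj_pt)

definition cols3 :: "'a::field ^ 3 \<Rightarrow> 'a ^ 3 \<Rightarrow> 'a ^ 3 \<Rightarrow> 'a ^ 3 ^ 3" where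
  "cols3 x y z = (\<chi> i. vector [x $ i, y $ i, z $ i])"

lemma cols3_mult_vector: "cols3 x y z *v c = c $ 1 *s x + c $ 2 *s y + c $ 3 *s z"
  by (simp add: vec_eq_iff cols3_def matrix_vector_mult_def sum_3 algebra_simps)

lemma det_cols3_dependent: "det (cols3 y z (b *s y + c *s z)) = 0"
  by (simp add: det_3 cols3_def algebra_simps)

lemma det_cols3_smult:
  "det (cols3 (a *s x) (b *s y) (c *s z)) = a * b * c * det (cols3 x y z)"
  by (simp add: det_3 cols3_def algebra_simps)

lemma det_cols3_nonzero:
  assumes "\<not> collinear3 (proj_pt x) (proj_pt y) (proj_pt z)"
  shows "det (cols3 x y z) \<noteq> 0"
proof
  assume "det (cols3 x y z) = 0"
  then have "\<not> (\<exists>B. B ** transpose (cols3 x y z) = mat 1)"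
    by (simp add: invertible_det_nz flip: invertible_left_inverse)
  then obtain a where a: "a v* cols3 x y z = 0" "a \<noteq> 0"
    by (auto simp: matrix_left_invertible_ker)
  have "(\<Sum>i\<in>UNIV. a $ i * w $ i) = 0" if "w \<in> {x, y, z}" for w
    using that a(1) unfolding vec_eq_iff
    by (auto simp: vector_matrix_mult_def cols3_def forall_3 sum_3 mult.commute)
  moreover have "(\<Sum>i\<in>UNIV. a $ i * (c *s w) $ i) = c * (\<Sum>i\<in>UNIV. a $ i * w $ i)" for c w
    by (simp add: sum_distrib_left mult.left_commute)
  ultimately have "(\<Sum>i\<in>UNIV. a $ i * (c *s w) $ i) = 0" if "w \<in> {x, y, z}" for c w
    using that by simp
  then have "collinear3 (proj_pt x) (proj_pt y) (proj_pt z)"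
    unfolding collinear3_def proj_pt_def using a(2) by (intro exI[of _ a]) auto
  then show False
    using assms by blast
qed

lemma less_4_cases: "(i::nat) < 4 \<Longrightarrow> i = 0 \<or> i = 1 \<or> i = 2 \<or> i = 3"
  by auto

lemma all_less_4: "(\<forall>i<4. P i) \<longleftrightarrow> P 0 \<and> P 1 \<and> P 2 \<and> P (3::nat)"
  by (auto dest!: less_4_cases)

lemma ex_less_4: "(\<exists>i<4. P i) \<longleftrightarrow> P 0 \<or> P 1 \<or> P 2 \<or> P (3::nat)"
  using all_less_4[of "\<lambda>i. \<not> P i"] by blast

lemma lessThan_4: "{..<4} = {0, 1, 2, 3::nat}"
  by auto

definition proj_frame :: "(nat \<Rightarrow> 'a::field ^ 3) \<Rightarrow> bool" where
  "proj_frame u \<longleftrightarrow>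
     (\<forall>i<4. \<forall>j<4. \<forall>k<4. i \<noteq> j \<and> i \<noteq> k \<and> j \<noteq> k \<longrightarrow>
        det (cols3 (u i) (u j) (u k)) \<noteq> 0)"

lemma proj_frame_det:
  assumes "proj_frame u" "i < 4" "j < 4" "k < 4" "i \<noteq> j" "i \<noteq> k" "j \<noteq> k"
  shows "det (cols3 (u i) (u j) (u k)) \<noteq> 0"
  using assms unfolding proj_frame_def by blast

lemma general_position_proj_frame:
  assumes "general_position ((\<lambda>i. proj_pt (u i)) ` {..<4})"
  shows "proj_frame u"
proof -
  have inj: "inj_on (\<lambda>i. proj_pt (u i)) {..<4}"
    using assms by (intro eq_card_imp_inj_on) (simp_all add: general_position_def)
  show ?thesis
    unfolding proj_frame_def
  proof (intro allI impI)
    fix i j k :: nat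
    assume "i < 4" "j < 4" "k < 4" "i \<noteq> j \<and> i \<noteq> k \<and> j \<noteq> k"
    then have "proj_pt (u i) \<noteq> proj_pt (u j)" "proj_pt (u i) \<noteq> proj_pt (u k)"
        "proj_pt (u j) \<noteq> proj_pt (u k)"
      using inj by (auto dest: inj_onD)
    then show "det (cols3 (u i) (u j) (u k)) \<noteq> 0"
      using assms \<open>i < 4\<close> \<open>j < 4\<close> \<open>k < 4\<close> unfolding general_position_def
      by (intro det_cols3_nonzero) blast
  qed
qed

lemma proj_frame_coords:
  assumes "proj_frame u"
  obtains a where "cols3 (u 0) (u 1) (u 2) *v a = u 3" "\<forall>i. a $ i \<noteq> 0"
proof -
  note det = proj_frame_det[OF assms]
  have "invertible (cols3 (u 0) (u 1) (u 2))"
    using det[of 0 1 2] by (simp add: invertible_det_nz)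
  then obtain a where a: "cols3 (u 0) (u 1) (u 2) *v a = u 3"
    unfolding invertible_def by (metis matrix_vector_mul_assoc matrix_vector_mul_lid)
  then have u3: "u 3 = a $ 1 *s u 0 + a $ 2 *s u 1 + a $ 3 *s u 2"
    by (simp add: cols3_mult_vector)
  have "a $ 1 \<noteq> 0"
  proof
    assume "a $ 1 = 0"
    then have "det (cols3 (u 1) (u 2) (u 3)) = 0"
      by (simp add: u3 det_cols3_dependent)
    then show False using det[of 1 2 3] by simp
  qed
  moreover have "a $ 2 \<noteq> 0"
  proof
    assume "a $ 2 = 0"
    then have "det (cols3 (u 0) (u 2) (u 3)) = 0"
      by (simp add: u3 det_cols3_dependent)
    then show False using det[of 0 2 3] by simp
  qed
  moreover have "a $ 3 \<noteq> 0"
  proof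
    assume "a $ 3 = 0"
    then have "det (cols3 (u 0) (u 1) (u 3)) = 0"
      by (simp add: u3 det_cols3_dependent)
    then show False using det[of 0 1 3] by simp
  qed
  ultimately show ?thesis
    using that a by (auto simp: forall_3)
qed

definition std_frame :: "nat \<Rightarrow> 'a::field ^ 3" where
  "std_frame = (!) [vector [1, 0, 0], vector [0, 1, 0], vector [0, 0, 1], vector [1, 1, 1]]"

lemma proj_frame_from_std_frame:
  assumes "proj_frame u"
  obtains M where "invertible M" "\<forall>i<4. proj_pt (M *v std_frame i) = proj_pt (u i)"
proof -
  obtain a where a: "cols3 (u 0) (u 1) (u 2) *v a = u 3" "\<forall>i. a $ i \<noteq> 0"
    using assms proj_frame_coords by blast
  define M where "M = cols3 (a $ 1 *s u 0) (a $ 2 *s u 1) (a $ 3 *s u 2)"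
  have "det (cols3 (u 0) (u 1) (u 2)) \<noteq> 0"
    using proj_frame_det[OF assms, of 0 1 2] by simp
  then have "invertible M"
    using a(2) by (simp add: M_def det_cols3_smult invertible_det_nz)
  moreover have "M *v std_frame 3 = u 3"
    using a(1) by (simp add: M_def std_frame_def cols3_mult_vector)
  ultimately show ?thesis
    using that a(2) by (simp add: all_less_4 M_def std_frame_def cols3_mult_vector)
qed

lemma proj_frame_map_exists:
  assumes "proj_frame u" "proj_frame w"
  obtains A where "invertible A" "\<forall>i<4. proj_pt (A *v u i) = proj_pt (w i)"
proof -
  obtain M where M: "invertible M" "\<forall>i<4. proj_pt (M *v std_frame i) = proj_pt (u i)"
    using assms(1) proj_frame_from_std_frame by blast
  obtain N where N: "invertible N" "\<forall>i<4. proj_pt (N *v std_frame i) = proj_pt (w i)"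
    using assms(2) proj_frame_from_std_frame by blast
  obtain M' where M': "M ** M' = mat 1" "M' ** M = mat 1"
    using M(1) unfolding invertible_def by blast
  have "invertible (N ** M')"
    using N(1) M' invertible_def invertible_mult by blast
  moreover have "proj_pt ((N ** M') *v u i) = proj_pt (w i)" if "i < 4" for i
  proof -
    have "proj_pt ((N ** M') *v u i) = proj_pt ((N ** M') *v (M *v std_frame i))"
      using M(2) that by (metis proj_pt_matrix_vector_cong)
    also have "\<dots> = proj_pt (N *v std_frame i)"
      by (simp add: matrix_vector_mul_assoc M'(2) flip: matrix_mul_assoc)
    finally show ?thesis
      using N(2) that by simp
  qed
  ultimately show ?thesis
    using that by blast
qed

lemma proj_frame_stabilizer_scalar:
  assumes "proj_frame u" "\<forall>i<4. proj_pt (B *v u i) = proj_pt (u i)"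
  obtains l where "B = mat l"
proof -
  let ?U = "cols3 (u 0) (u 1) (u 2)"
  obtain a where a: "?U *v a = u 3" "\<forall>i. a $ i \<noteq> 0"
    using assms(1) proj_frame_coords by blast
  have "invertible ?U"
    using proj_frame_det[OF assms(1), of 0 1 2] by (simp add: invertible_det_nz)
  then obtain U' where U': "?U ** U' = mat 1" "U' ** ?U = mat 1"
    unfolding invertible_def by blast
  have "\<forall>i<4. \<exists>l. B *v u i = l *s u i"
    using assms(2) by (auto simp: proj_pt_eq_iff)
  then obtain l0 l1 l2 l where
    l: "B *v u 0 = l0 *s u 0" "B *v u 1 = l1 *s u 1" "B *v u 2 = l2 *s u 2" "B *v u 3 = l *s u 3"
    unfolding all_less_4 by blast
  have B_U: "B *v (?U *v c) = ?U *v vector [c $ 1 * l0, c $ 2 * l1, c $ 3 * l2]" for c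
    using l by (simp add: cols3_mult_vector vector_scalar_commute matrix_vector_right_distrib)
  have "?U *v vector [a $ 1 * l0, a $ 2 * l1, a $ 3 * l2] = B *v (?U *v a)"
    by (rule B_U[symmetric])
  also have "\<dots> = l *s (?U *v a)"
    unfolding a(1) by (rule l(4))
  also have "\<dots> = ?U *v (l *s a)"
    by (rule vector_scalar_commute[symmetric])
  finally have "vector [a $ 1 * l0, a $ 2 * l1, a $ 3 * l2] = l *s a"
    by (metis U'(2) matrix_vector_mul_assoc matrix_vector_mul_lid)
  then have "l0 = l" "l1 = l" "l2 = l"
    using a(2) by (auto simp: vec_eq_iff forall_3 mult.commute)
  then have "vector [c $ 1 * l0, c $ 2 * l1, c $ 3 * l2] = l *s c" for c :: "'a ^ 3"
    by (simp add: vec_eq_iff forall_3 mult.commute)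
  then have "B *v (?U *v c) = l *s (?U *v c)" for c
    by (simp only: B_U vector_scalar_commute)
  then have "B *v x = mat l *v x" for x
    by (metis U'(1) matrix_vector_mul_assoc matrix_vector_mul_lid mat_matrix_vector_mult)
  then show ?thesis
    using that matrix_eq by blast
qed

definition frob_mat :: "nat \<Rightarrow> 'a::field ^ 'n ^ 'm \<Rightarrow> 'a ^ 'n ^ 'm" where
  "frob_mat q A = (\<chi> i j. (A $ i $ j) ^ q)"

lemma power_divide_eq_self:
  fixes a x :: "'a::field"
  assumes "a \<noteq> 0" "a ^ n = a * l" "x ^ n = x * l"
  shows "(x / a) ^ n = x / a"
proof -
  have "l \<noteq> 0"
    using assms(1,2) by (metis mult_zero_right power_not_zero)
  then show ?thesis
    using assms by (simp add: power_divide)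
qed

lemma k_automorphism_rescale:
  assumes "invertible A" "frob_mat q A = A ** mat l"
  obtains c where "c \<noteq> 0" "k_automorphism q (mat c ** A)"
proof -
  obtain A' where A': "A ** A' = mat 1"
    using assms(1) unfolding invertible_def by blast
  have "A \<noteq> 0"
  proof
    assume "A = 0"
    then have "(A ** A') $ 1 $ 1 = 0"
      by (simp add: matrix_matrix_mult_def)
    then show False
      by (simp add: A' mat_def)
  qed
  then obtain i0 j0 where a: "A $ i0 $ j0 \<noteq> 0"
    by (auto simp: vec_eq_iff)
  have entries: "(A $ i $ j) ^ q = A $ i $ j * l" for i j
    using arg_cong[OF assms(2), of "\<lambda>B. B $ i $ j"]
    by (simp add: frob_mat_def matrix_mat_mult_nth)
  define c where "c = inverse (A $ i0 $ j0)"
  have "c \<noteq> 0"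
    using a by (simp add: c_def)
  moreover have "((mat c ** A) $ i $ j) ^ q = (mat c ** A) $ i $ j" for i j
    using power_divide_eq_self[OF a entries entries]
    by (simp add: c_def mat_matrix_mult_nth field_simps)
  moreover have "invertible (mat c ** A)"
    using \<open>c \<noteq> 0\<close> assms(1) by (simp add: invertible_mat invertible_mult)
  ultimately show ?thesis
    using that unfolding k_automorphism_def by blast
qed

locale frobenius =
  fixes q :: nat
  assumes power_add: "((x :: 'a::field) + y) ^ q = x ^ q + y ^ q"
begin

lemma q_pos: "q > 0"
proof (rule ccontr)
  assume "\<not> q > 0"
  then have "(1::'a) = 1 + 1"
    using power_add[of 1 0] by simp
  then show False
    by (metis add_cancel_left_right zero_neq_one)
qed

lemma power_sum_distrib: "(\<Sum>i\<in>S. f i) ^ q = (\<Sum>i\<in>S. (f i :: 'a) ^ q)"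
  using q_pos by (induction S rule: infinite_finite_induct) (simp_all add: power_add)

lemma frob_vec_smult: "frob_vec q (c *s v) = c ^ q *s frob_vec q (v :: 'a ^ 3)"
  by (simp add: frob_vec_def vec_eq_iff power_mult_distrib)

lemma frob_vec_matrix_vector_mult:
  "frob_vec q (A *v v) = frob_mat q A *v frob_vec q (v :: 'a ^ 3)"
  by (simp add: frob_vec_def frob_mat_def vec_eq_iff matrix_vector_mult_def power_sum_distrib
      power_mult_distrib)

lemma proj_pt_frob_vec_cong:
  assumes "proj_pt u = proj_pt v"
  shows "proj_pt (frob_vec q u) = proj_pt (frob_vec q (v :: 'a ^ 3))"
proof -
  obtain c where "c \<noteq> 0" "u = c *s v"
    using assms by (auto simp: proj_pt_eq_iff)
  then show ?thesis
    using q_pos by (simp add: frob_vec_smult)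
qed

lemma frob_mat_maps_frame:
  fixes u w :: "nat \<Rightarrow> 'a ^ 3"
  assumes maps: "\<forall>i<4. proj_pt (A *v u i) = proj_pt (w i)"
    and perm: "\<forall>j<4. \<exists>i<4. proj_pt (frob_vec q (u i)) = proj_pt (u j) \<and>
                            proj_pt (frob_vec q (w i)) = proj_pt (w j)"
  shows "\<forall>j<4. proj_pt (frob_mat q A *v u j) = proj_pt (w j)"
proof (intro allI impI)
  fix j :: nat
  assume "j < 4"
  then obtain i where i: "i < 4" "proj_pt (frob_vec q (u i)) = proj_pt (u j)"
      "proj_pt (frob_vec q (w i)) = proj_pt (w j)"
    using perm by blast
  have "proj_pt (frob_mat q A *v u j) = proj_pt (frob_mat q A *v frob_vec q (u i))"
    using i(2) by (metis proj_pt_matrix_vector_cong)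
  also have "\<dots> = proj_pt (frob_vec q (A *v u i))"
    by (simp add: frob_vec_matrix_vector_mult)
  also have "\<dots> = proj_pt (frob_vec q (w i))"
    using maps i(1) proj_pt_frob_vec_cong by blast
  finally show "proj_pt (frob_mat q A *v u j) = proj_pt (w j)"
    using i(3) by simp
qed

theorem proj_frame_map_descends:
  fixes u w :: "nat \<Rightarrow> 'a ^ 3"
  assumes "proj_frame u" "proj_frame w"
    and perm: "\<forall>j<4. \<exists>i<4. proj_pt (frob_vec q (u i)) = proj_pt (u j) \<and>
                            proj_pt (frob_vec q (w i)) = proj_pt (w j)"
  obtains A where "k_automorphism q A" "\<forall>i<4. proj_pt (A *v u i) = proj_pt (w i)"
proof -
  obtain A where A: "invertible A" "\<forall>i<4. proj_pt (A *v u i) = proj_pt (w i)"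
    using assms(1,2) proj_frame_map_exists by blast
  obtain A' where A': "A ** A' = mat 1" "A' ** A = mat 1"
    using A(1) unfolding invertible_def by blast
  have "proj_pt ((A' ** frob_mat q A) *v u i) = proj_pt (u i)" if "i < 4" for i
  proof -
    have "proj_pt (frob_mat q A *v u i) = proj_pt (w i)"
      using frob_mat_maps_frame[OF A(2) perm] that by blast
    then have "proj_pt ((A' ** frob_mat q A) *v u i) = proj_pt (A' *v w i)"
      by (metis proj_pt_matrix_vector_cong matrix_vector_mul_assoc)
    also have "\<dots> = proj_pt (A' *v (A *v u i))"
      using A(2) that by (metis proj_pt_matrix_vector_cong)
    finally show ?thesis
      by (simp add: matrix_vector_mul_assoc A'(2))
  qed
  then obtain l where l: "A' ** frob_mat q A = mat l"
    using assms(1) proj_frame_stabilizer_scalar by blast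
  have "frob_mat q A = (A ** A') ** frob_mat q A"
    by (simp add: A'(1))
  also have "\<dots> = A ** mat l"
    by (simp add: l flip: matrix_mul_assoc)
  finally obtain c where c: "c \<noteq> 0" "k_automorphism q (mat c ** A)"
    using A(1) k_automorphism_rescale by blast
  have "proj_pt ((mat c ** A) *v x) = proj_pt (A *v x)" for x
    using c(1) by (simp add: mat_matrix_vector_mult flip: matrix_vector_mul_assoc)
  then show ?thesis
    using that c(2) A(2) by simp
qed

end

lemma funpow_orbit_eq_image:
  assumes "(f ^^ n) x = x" "0 < n"
  shows "{(f ^^ k) x | k. True} = (\<lambda>k. (f ^^ k) x) ` {..<n}"
proof -
  have "(f ^^ k) x = (f ^^ (k mod n)) x" for k
    using assms(1) by (simp add: funpow_mod_eq)
  moreover have "k mod n < n" for k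
    using assms(2) by simp
  ultimately show ?thesis
    by blast
qed

lemma funpow_period_4_card_2:
  assumes "(f ^^ 4) x = x" "card ((\<lambda>k. (f ^^ k) x) ` {..<4}) = 2"
  shows "f (f x) = x"
proof (rule ccontr)
  assume "f (f x) \<noteq> x"
  have orbit: "(\<lambda>k. (f ^^ k) x) ` {..<4} = {x, f x, f (f x), f (f (f x))}"
    unfolding lessThan_4 by (simp add: numeral_eq_Suc)
  have period: "f (f (f (f x))) = x"
    using assms(1) by (simp add: numeral_eq_Suc)
  have "f x \<noteq> x"
  proof
    assume "f x = x"
    then have "card ((\<lambda>k. (f ^^ k) x) ` {..<4}) = 1"
      by (simp add: orbit)
    then show False
      using assms(2) by simp
  qed
  moreover have "f (f x) \<noteq> f x"
  proof
    assume "f (f x) = f x"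
    then have "f (f (f (f x))) = f x"
      by simp
    then show False
      using \<open>f x \<noteq> x\<close> period by simp
  qed
  ultimately have "card {x, f x, f (f x)} = 3"
    using \<open>f (f x) \<noteq> x\<close> by simp
  moreover have "card {x, f x, f (f x)} \<le> card ((\<lambda>k. (f ^^ k) x) ` {..<4})"
    unfolding orbit by (rule card_mono) auto
  ultimately show False
    using assms(2) by simp
qed

locale frobenius_period_4 = frobenius q for q +
  assumes card_eq: "CARD('a::field) = q ^ 4"
begin

lemma power_card: "x ^ q ^ 4 = (x :: 'a)"
proof -
  have "CARD('a) > 0"
    using card_eq q_pos by simp
  then have "finite (UNIV :: 'a set)"
    by (rule card_ge_0_finite)
  from field_power_card_eq[OF this, of x] show ?thesis
    by (simp add: card_eq)
qed

lemma frob_vec_period: "(frob_vec q ^^ 4) v = (v :: 'a ^ 3)"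
proof -
  have "(((x ^ q) ^ q) ^ q) ^ q = x" for x :: 'a
    using power_card[of x] by (simp add: power_mult[symmetric] power4_eq_xxxx mult.assoc)
  then show ?thesis
    by (simp add: numeral_eq_Suc frob_vec_def vec_eq_iff)
qed

lemma frob_pt_proj_pt: "frob_pt q (proj_pt v) = proj_pt (frob_vec q (v :: 'a ^ 3))"
proof
  show "frob_pt q (proj_pt v) \<subseteq> proj_pt (frob_vec q v)"
    using q_pos by (auto simp: frob_pt_def proj_pt_def frob_vec_smult)
  show "proj_pt (frob_vec q v) \<subseteq> frob_pt q (proj_pt v)"
  proof
    fix y
    assume "y \<in> proj_pt (frob_vec q v)"
    then obtain c where c: "c \<noteq> 0" "y = c *s frob_vec q v"
      by (auto simp: proj_pt_def)
    have "(c ^ q ^ 3) ^ q = c"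
      using power_card[of c] by (simp add: eval_nat_numeral mult.assoc flip: power_mult)
    then have "y = frob_vec q (c ^ q ^ 3 *s v)"
      by (simp add: c(2) frob_vec_smult)
    moreover have "c ^ q ^ 3 *s v \<in> proj_pt v"
      using c(1) by (auto simp: proj_pt_def)
    ultimately show "y \<in> frob_pt q (proj_pt v)"
      by (simp add: frob_pt_def)
  qed
qed

lemma funpow_frob_pt_proj_pt:
  "(frob_pt q ^^ k) (proj_pt v) = proj_pt ((frob_vec q ^^ k) (v :: 'a ^ 3))"
  by (induction k) (simp_all add: frob_pt_proj_pt)

lemma closed_point_orbit:
  assumes "closed_point q d P"
  obtains v :: "'a ^ 3" where "P = (\<lambda>k. proj_pt ((frob_vec q ^^ k) v)) ` {..<4}" "card P = d"
proof -
  obtain v :: "'a ^ 3" where P: "P = {(frob_pt q ^^ k) (proj_pt v) | k. True}" "card P = d"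
    using assms unfolding closed_point_def proj_points_def proj_pt_def[symmetric] by blast
  have "(frob_pt q ^^ 4) (proj_pt v) = proj_pt v"
    by (simp add: funpow_frob_pt_proj_pt frob_vec_period)
  then have "P = (\<lambda>k. (frob_pt q ^^ k) (proj_pt v)) ` {..<4}"
    unfolding P(1) by (rule funpow_orbit_eq_image) simp
  then show ?thesis
    using that P(2) by (simp add: funpow_frob_pt_proj_pt)
qed

lemma closed_point_degree_2:
  assumes "closed_point q 2 P"
  obtains v :: "'a ^ 3"
  where "P = {proj_pt v, proj_pt (frob_vec q v)}" "proj_pt (frob_vec q (frob_vec q v)) = proj_pt v"
proof -
  obtain v :: "'a ^ 3" where P: "P = (\<lambda>k. proj_pt ((frob_vec q ^^ k) v)) ` {..<4}" "card P = 2"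
    using assms closed_point_orbit by blast
  have "(frob_pt q ^^ 4) (proj_pt v) = proj_pt v"
    by (simp add: funpow_frob_pt_proj_pt frob_vec_period)
  moreover have "card ((\<lambda>k. (frob_pt q ^^ k) (proj_pt v)) ` {..<4}) = 2"
    using P by (simp add: funpow_frob_pt_proj_pt)
  ultimately have "frob_pt q (frob_pt q (proj_pt v)) = proj_pt v"
    by (rule funpow_period_4_card_2)
  then have FFv: "proj_pt (frob_vec q (frob_vec q v)) = proj_pt v"
    by (simp add: frob_pt_proj_pt)
  then have "proj_pt (frob_vec q (frob_vec q (frob_vec q v))) = proj_pt (frob_vec q v)"
    by (rule proj_pt_frob_vec_cong)
  then have "P = {proj_pt v, proj_pt (frob_vec q v)}"
    unfolding P(1) lessThan_4 by (auto simp: numeral_eq_Suc FFv)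
  then show ?thesis
    using that FFv by blast
qed

lemma closed_points_degree_2_transitive:
  fixes p0 p' q0 q' :: "('a ^ 3) set set"
  assumes "closed_point q 2 p0" "closed_point q 2 p'" "closed_point q 2 q0" "closed_point q 2 q'"
    and "general_position (p0 \<union> p')" "general_position (q0 \<union> q')"
  shows "\<exists>A. k_automorphism q A \<and> act A p0 = q0 \<and> act A p' = q'"
proof -
  let ?F = "frob_vec q"
  obtain v1 where v1: "p0 = {proj_pt v1, proj_pt (?F v1)}" "proj_pt (?F (?F v1)) = proj_pt v1"
    using assms(1) closed_point_degree_2 by blast
  obtain v2 where v2: "p' = {proj_pt v2, proj_pt (?F v2)}" "proj_pt (?F (?F v2)) = proj_pt v2"
    using assms(2) closed_point_degree_2 by blast
  obtain w1 where w1: "q0 = {proj_pt w1, proj_pt (?F w1)}" "proj_pt (?F (?F w1)) = proj_pt w1"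
    using assms(3) closed_point_degree_2 by blast
  obtain w2 where w2: "q' = {proj_pt w2, proj_pt (?F w2)}" "proj_pt (?F (?F w2)) = proj_pt w2"
    using assms(4) closed_point_degree_2 by blast
  define u where "u = (!) [v1, ?F v1, v2, ?F v2]"
  define w where "w = (!) [w1, ?F w1, w2, ?F w2]"
  have "p0 \<union> p' = (\<lambda>i. proj_pt (u i)) ` {..<4}" "q0 \<union> q' = (\<lambda>i. proj_pt (w i)) ` {..<4}"
    unfolding u_def w_def v1 v2 w1 w2 lessThan_4 by auto
  then have "proj_frame u" "proj_frame w"
    using assms(5,6) general_position_proj_frame by metis+
  moreover have "\<forall>j<4. \<exists>i<4. proj_pt (?F (u i)) = proj_pt (u j) \<and>
                               proj_pt (?F (w i)) = proj_pt (w j)"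
    unfolding all_less_4 ex_less_4 u_def w_def using v1(2) v2(2) w1(2) w2(2) by simp
  ultimately obtain A where A: "k_automorphism q A" "\<forall>i<4. proj_pt (A *v u i) = proj_pt (w i)"
    using proj_frame_map_descends by blast
  have "act A p0 = q0" "act A p' = q'"
    using A(2) unfolding all_less_4 u_def w_def v1 v2 w1 w2 by (simp_all add: act_def image_proj_pt)
  then show ?thesis
    using A(1) by blast
qed

lemma closed_points_degree_4_transitive:
  fixes p0 q0 :: "('a ^ 3) set set"
  assumes "closed_point q 4 p0" "closed_point q 4 q0" "general_position p0" "general_position q0"
  shows "\<exists>A. k_automorphism q A \<and> act A p0 = q0"
proof -
  obtain v where v: "p0 = (\<lambda>k. proj_pt ((frob_vec q ^^ k) v)) ` {..<4}"
    using assms(1) closed_point_orbit by blast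
  obtain w where w: "q0 = (\<lambda>k. proj_pt ((frob_vec q ^^ k) w)) ` {..<4}"
    using assms(2) closed_point_orbit by blast
  have "proj_frame (\<lambda>k. (frob_vec q ^^ k) v)" "proj_frame (\<lambda>k. (frob_vec q ^^ k) w)"
    using assms(3,4) unfolding v w by (simp_all add: general_position_proj_frame)
  moreover have "frob_vec q (frob_vec q (frob_vec q (frob_vec q x))) = x" for x :: "'a ^ 3"
    using frob_vec_period[of x] by (simp add: numeral_eq_Suc)
  then have "\<forall>j<4. \<exists>i<4.
      proj_pt (frob_vec q ((frob_vec q ^^ i) v)) = proj_pt ((frob_vec q ^^ j) v) \<and>
      proj_pt (frob_vec q ((frob_vec q ^^ i) w)) = proj_pt ((frob_vec q ^^ j) w)"
    unfolding all_less_4 ex_less_4 by (simp add: numeral_eq_Suc)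
  ultimately obtain A where A: "k_automorphism q A"
      "\<forall>i<4. proj_pt (A *v (frob_vec q ^^ i) v) = proj_pt ((frob_vec q ^^ i) w)"
    using proj_frame_map_descends by blast
  have "act A p0 = q0"
    unfolding v w act_image_proj_pt using A(2) by (intro image_cong) auto
  then show ?thesis
    using A(1) by blast
qed

end

theorem lemma4p1:
  fixes p m q :: nat
  assumes "prime p" and "m \<ge> 1" and "q = p ^ m"
    and "CARD('a::{field,finite}) = q ^ 4"
  shows "(\<forall>p0 p' q0 q' :: ('a ^ 3) set set.
            closed_point q 2 p0 \<and> closed_point q 2 p' \<and>
            closed_point q 2 q0 \<and> closed_point q 2 q' \<and>
            general_position (p0 \<union> p') \<and> general_position (q0 \<union> q')
            \<longrightarrow> (\<exists>A. k_automorphism q A \<and> act A p0 = q0 \<and> act A p' = q'))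
       \<and> (\<forall>p0 q0 :: ('a ^ 3) set set.
            closed_point q 4 p0 \<and> closed_point q 4 q0 \<and>
            general_position p0 \<and> general_position q0
            \<longrightarrow> (\<exists>A. k_automorphism q A \<and> act A p0 = q0))"
proof -
  have char: "CHAR('a) = p"
    using CHAR_eq_prime_of_card_power[OF assms(1), of "m * 4"] assms(2-4) by (simp add: power_mult)
  have frob: "frobenius_period_4 TYPE('a) q"
  proof
    have "prime CHAR('a)" "q = CHAR('a) ^ m"
      using char assms(1,3) by simp_all
    then show "(x + y) ^ q = x ^ q + y ^ q" for x y :: 'a
      by (rule freshmans_dream')
    show "CARD('a) = q ^ 4"
      by (rule assms(4))
  qed
  show ?thesis
    by (intro conjI allI impI; elim conjE)
      (rule frobenius_period_4.closed_points_degree_2_transitive[OF frob]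
        frobenius_period_4.closed_points_degree_4_transitive[OF frob]; assumption)+
qed

end
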